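(* Let $q=2^m$. Then the setwise stabilizer $\mathrm{Stab}_{U_{q+1}}$ of $U_{q+1}$ consists exactly of the following linear fractional transformations: (I) $u\mapsto u_0u$ with $u_0\in U_{q+1}$; (II) $u\mapsto u_0u^{-1}$ with $u_0\in U_{q+1}$; (III) $u\mapsto \frac{u+c^qu_0}{cu+u_0}$ with $u_0\in U_{q+1}$ and $c\in\mathrm{GF}(q^2)^*\setminus U_{q+1}$.
   Context: $U_{q+1}$ is the set of $(q+1)$-th roots of unity in $\mathrm{GF}(q^2)$, viewed as a subset of $\mathrm{PG}(1,q^2)=\mathrm{GF}(q^2)\cup\{\infty\}$. $\mathrm{Stab}_{U_{q+1}}$ is the setwise stabilizer of $U_{q+1}$ under the action of $\mathrm{PGL}_2(\mathrm{GF}(q^2))$ on $\mathrm{PG}(1,q^2)$ by linear fractional transformations $x\mapsto\frac{ax+b}{cx+d}$. *)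

theory Defs
  imports Main
begin

text \<open>The projective line PG(1,F) over a field F is modelled as \<open>'a option\<close>:
  \<open>Some x\<close> is the affine point x and \<open>None\<close> is the point at infinity.\<close>

definition lft :: "'a::field \<Rightarrow> 'a \<Rightarrow> 'a \<Rightarrow> 'a \<Rightarrow> 'a option \<Rightarrow> 'a option" where
  "lft a b c d p = (case p of
      None \<Rightarrow> (if c = 0 then None else Some (a / c))
    | Some x \<Rightarrow> (if c * x + d = 0 then None else Some ((a * x + b) / (c * x + d))))"

text \<open>PGL_2(F), identified with the set of permutations of PG(1,F) it induces
  (the action is faithful).\<close>
definition PGL2 :: "('a::field option \<Rightarrow> 'a option) set" where
  "PGL2 = {f. \<exists>a b c d. a * d - b * c \<noteq> 0 \<and> f = lft a b c d}"

definition roots_of_unity :: "nat \<Rightarrow> 'a::field set" where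
  "roots_of_unity n = {x. x ^ n = 1}"

definition Stab :: "'a::field set \<Rightarrow> ('a option \<Rightarrow> 'a option) set" where
  "Stab S = {f \<in> PGL2. f ` (Some ` S) = Some ` S}"

end

theory Submission
  imports Defs "HOL-Computational_Algebra.Polynomial" "HOL-Computational_Algebra.Primes"
begin

text \<open>Write \<open>x\<^sup>* = x ^ q\<close>. As \<open>|F| = q\<^sup>2\<close> with \<open>q\<close> a power of 2, \<open>x \<mapsto> x\<^sup>*\<close> is an
  involutive field automorphism and \<open>U = U\<^sub>q\<^sub>+\<^sub>1 = {u. u\<^sup>* u = 1}\<close> is its norm-one group.
  For \<open>u \<in> U\<close> we have \<open>u\<^sup>* = 1 / u\<close>, so the condition that \<open>(a u + b) / (c u + d)\<close> lies
  in \<open>U\<close>, i.e. that \<open>a u + b\<close> and \<open>c u + d\<close> have the same norm, is a quadratic equation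
  in \<open>u\<close> with coefficients \<open>a\<^sup>* b - c\<^sup>* d\<close>, \<open>a\<^sup>* a + b\<^sup>* b - c\<^sup>* c - d\<^sup>* d\<close> and \<open>b\<^sup>* a - d\<^sup>* c\<close>.
  Since \<open>U\<close> has at least three points (\<open>1\<close>, \<open>v\<close> and \<open>1 / v\<close> for \<open>v = x\<^sup>* / x \<noteq> 1\<close>;
  characteristic 2 rules out \<open>v = -1\<close>), these coefficients vanish. If \<open>c = 0\<close> or \<open>a = 0\<close>
  this gives types I and II; otherwise scale to \<open>a = 1\<close>: then \<open>b = c\<^sup>* d\<close>, and the second
  equation becomes \<open>(1 - c\<^sup>* c) (1 - d\<^sup>* d) = 0\<close>, where \<open>c\<^sup>* c \<noteq> 1\<close> because the
  determinant is \<open>d (1 - c\<^sup>* c) \<noteq> 0\<close>. Conversely all three types preserve norms.\<close>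

lemma lft_Some: "c * x + d \<noteq> 0 \<Longrightarrow> lft a b c d (Some x) = Some ((a * x + b) / (c * x + d))"
  by (simp add: lft_def)

lemma lft_divide:
  fixes k a b c d :: "'a::field"
  assumes "k \<noteq> 0"
  shows "lft (a / k) (b / k) (c / k) (d / k) = lft a b c d"
proof
  fix p
  have "c / k * x + d / k = (c * x + d) / k" "a / k * x + b / k = (a * x + b) / k" for x
    by (simp_all add: add_divide_distrib)
  with assms show "lft (a / k) (b / k) (c / k) (d / k) p = lft a b c d p"
    by (cases p) (simp_all add: lft_def)
qed

lemma lft_in_StabI:
  fixes S :: "'a::field set"
  assumes "finite S" and det: "a * d - b * c \<noteq> 0"
    and maps: "\<And>u. u \<in> S \<Longrightarrow> c * u + d \<noteq> 0 \<and> (a * u + b) / (c * u + d) \<in> S"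
  shows "lft a b c d \<in> Stab S"
proof -
  have into: "lft a b c d ` Some ` S \<subseteq> Some ` S"
    using maps by (auto simp: lft_Some)
  have "inj_on (lft a b c d) (Some ` S)"
  proof (rule inj_onI)
    fix x y assume "x \<in> Some ` S" "y \<in> Some ` S" and eq: "lft a b c d x = lft a b c d y"
    then obtain u v where uv: "x = Some u" "y = Some v" "u \<in> S" "v \<in> S"
      by blast
    with eq maps have "(a * u + b) * (c * v + d) = (a * v + b) * (c * u + d)"
      by (auto simp: lft_Some frac_eq_eq)
    moreover have "(a * u + b) * (c * v + d) - (a * v + b) * (c * u + d) = (a * d - b * c) * (u - v)"
      by (simp add: algebra_simps)
    ultimately show "x = y"
      using uv det by simp
  qed
  with into \<open>finite S\<close> have "lft a b c d ` Some ` S = Some ` S"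
    by (simp add: endo_inj_surj)
  with det show ?thesis
    by (auto simp: Stab_def PGL2_def)
qed

lemma lft_maps_into_if_in_Stab:
  assumes "lft a b c d \<in> Stab S" and "u \<in> S"
  shows "c * u + d \<noteq> 0 \<and> (a * u + b) / (c * u + d) \<in> S"
proof -
  have "lft a b c d (Some u) \<in> Some ` S"
    using assms by (auto simp: Stab_def)
  then show ?thesis
    by (auto simp: lft_def split: if_splits)
qed

lemma Stab_imp_lft: "f \<in> Stab S \<Longrightarrow> \<exists>a b c d. a * d - b * c \<noteq> 0 \<and> f = lft a b c d"
  by (auto simp: Stab_def PGL2_def)

lemma roots_of_unity_mult:
  "x \<in> roots_of_unity n \<Longrightarrow> y \<in> roots_of_unity n \<Longrightarrow> x * y \<in> roots_of_unity n"
  by (simp add: roots_of_unity_def power_mult_distrib)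

lemma roots_of_unity_divide:
  "x \<in> roots_of_unity n \<Longrightarrow> y \<in> roots_of_unity n \<Longrightarrow> x / y \<in> roots_of_unity n"
  by (simp add: roots_of_unity_def power_divide)

lemma quadratic_eq_0_if_three_roots:
  fixes A B C :: "'a::idom"
  assumes "3 \<le> card S" and roots: "\<And>x. x \<in> S \<Longrightarrow> A + B * x + C * x ^ 2 = 0"
  shows "A = 0 \<and> B = 0 \<and> C = 0"
proof (rule ccontr)
  let ?P = "[:A, B, C:]"
  assume "\<not> (A = 0 \<and> B = 0 \<and> C = 0)"
  then have P: "?P \<noteq> 0"
    by simp
  have "S \<subseteq> {x. poly ?P x = 0}"
    using roots by (auto simp: algebra_simps power2_eq_square)
  then have "card S \<le> card {x. poly ?P x = 0}"
    by (intro card_mono poly_roots_finite P)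
  also have "\<dots> \<le> degree ?P"
    by (rule card_poly_roots_bound[OF P])
  also have "\<dots> \<le> 2"
    by (simp add: degree_pCons_le le_trans[OF degree_pCons_le])
  finally show False
    using assms(1) by simp
qed

context
  fixes q :: nat
  assumes conj_add: "\<And>x y :: 'a::{field,finite}. (x + y) ^ q = x ^ q + y ^ q"
    and conj_conj: "\<And>x :: 'a. (x ^ q) ^ q = x"
begin

lemma zero_power_q [simp]: "(0::'a) ^ q = 0"
  using conj_conj[of 0] by (cases q) auto

lemma minus_power_q: "(- x :: 'a) ^ q = - (x ^ q)"
  using conj_add[of x "- x"] by (simp add: add_eq_0_iff)

lemma roots_of_unity_iff: "x \<in> roots_of_unity (q + 1) \<longleftrightarrow> x ^ q * x = (1::'a)"
  by (simp add: roots_of_unity_def mult.commute)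

lemma roots_of_unity_nonzero: "x \<in> roots_of_unity (q + 1) \<Longrightarrow> x \<noteq> (0::'a)"
  unfolding roots_of_unity_iff by auto

lemma power_q_root_of_unity: "u \<in> roots_of_unity (q + 1) \<Longrightarrow> u ^ q = 1 / (u::'a)"
  using roots_of_unity_nonzero[of u] unfolding roots_of_unity_iff by (simp add: eq_divide_eq)

lemma minus_one_in_roots_of_unity: "(-1::'a) \<in> roots_of_unity (q + 1)"
  unfolding roots_of_unity_iff by (simp add: minus_power_q)

lemma rotation_in_Stab:
  assumes "u0 \<in> roots_of_unity (q + 1)"
  shows "lft u0 0 0 1 \<in> Stab (roots_of_unity (q + 1) :: 'a set)"
  by (rule lft_in_StabI) (use assms roots_of_unity_nonzero roots_of_unity_mult in simp_all)

lemma inversion_in_Stab: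
  assumes "u0 \<in> roots_of_unity (q + 1)"
  shows "lft 0 u0 1 0 \<in> Stab (roots_of_unity (q + 1) :: 'a set)"
  by (rule lft_in_StabI) (use assms roots_of_unity_nonzero roots_of_unity_divide in simp_all)

lemma type_III_in_Stab:
  fixes c u0 :: 'a
  assumes u0: "u0 \<in> roots_of_unity (q + 1)" and c: "c \<notin> roots_of_unity (q + 1)"
  shows "lft 1 (c ^ q * u0) c u0 \<in> Stab (roots_of_unity (q + 1))"
proof (rule lft_in_StabI)
  have "c ^ q * c \<noteq> 1"
    using c unfolding roots_of_unity_iff .
  moreover have "1 * u0 - c ^ q * u0 * c = u0 * (1 - c ^ q * c)"
    by (simp add: algebra_simps)
  ultimately show "1 * u0 - c ^ q * u0 * c \<noteq> 0"
    using roots_of_unity_nonzero[OF u0] by simp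
next
  fix u :: 'a assume u: "u \<in> roots_of_unity (q + 1)"
  have den: "c * u + u0 \<noteq> 0"
  proof
    assume "c * u + u0 = 0"
    then have "c = (-1) * u0 / u"
      using roots_of_unity_nonzero[OF u] by (simp add: eq_divide_eq add_eq_0_iff)
    with c show False
      using u u0 minus_one_in_roots_of_unity by (metis roots_of_unity_divide roots_of_unity_mult)
  qed
  have "(u + c ^ q * u0) ^ q * (u + c ^ q * u0) = (1 / u + c / u0) * (u + c ^ q * u0)"
    using u u0 by (simp add: conj_add power_mult_distrib conj_conj power_q_root_of_unity)
  also have "\<dots> = (c ^ q / u + 1 / u0) * (c * u + u0)"
    using roots_of_unity_nonzero[OF u] roots_of_unity_nonzero[OF u0] by (simp add: field_simps)
  also have "\<dots> = (c * u + u0) ^ q * (c * u + u0)"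
    using u u0 by (simp add: conj_add power_mult_distrib power_q_root_of_unity)
  finally have "(1 * u + c ^ q * u0) ^ q * (1 * u + c ^ q * u0) = (c * u + u0) ^ q * (c * u + u0)"
    by simp
  with den show "c * u + u0 \<noteq> 0 \<and> (1 * u + c ^ q * u0) / (c * u + u0) \<in> roots_of_unity (q + 1)"
    unfolding roots_of_unity_iff by (simp add: power_divide)
qed simp

lemma quadratic_if_lft_in_roots_of_unity:
  fixes a b c d u :: 'a
  assumes u: "u \<in> roots_of_unity (q + 1)" and "c * u + d \<noteq> 0"
    and "(a * u + b) / (c * u + d) \<in> roots_of_unity (q + 1)"
  shows "(a ^ q * b - c ^ q * d) + (a ^ q * a + b ^ q * b - c ^ q * c - d ^ q * d) * u
      + (b ^ q * a - d ^ q * c) * u ^ 2 = 0"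
proof -
  have "(a * u + b) ^ q * (a * u + b) = (c * u + d) ^ q * (c * u + d)"
    using assms(2,3) unfolding roots_of_unity_iff by (simp add: power_divide field_simps)
  then have "(a ^ q / u + b ^ q) * (a * u + b) = (c ^ q / u + d ^ q) * (c * u + d)"
    using u by (simp add: conj_add power_mult_distrib power_q_root_of_unity)
  then have "(a ^ q + b ^ q * u) * (a * u + b) = (c ^ q + d ^ q * u) * (c * u + d)"
    using roots_of_unity_nonzero[OF u] by (simp add: field_simps)
  then show ?thesis
    by (simp add: algebra_simps power2_eq_square)
qed

lemma lft_coeffs_if_in_Stab:
  fixes a b c d :: 'a
  assumes "3 \<le> card (roots_of_unity (q + 1) :: 'a set)"
    and "lft a b c d \<in> Stab (roots_of_unity (q + 1))"
  shows "a ^ q * b = c ^ q * d" and "a ^ q * a + b ^ q * b = c ^ q * c + d ^ q * d"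
proof -
  have "a ^ q * b - c ^ q * d = 0 \<and> a ^ q * a + b ^ q * b - c ^ q * c - d ^ q * d = 0
      \<and> b ^ q * a - d ^ q * c = 0"
    using assms(1) by (rule quadratic_eq_0_if_three_roots)
      (use lft_maps_into_if_in_Stab[OF assms(2)] quadratic_if_lft_in_roots_of_unity in blast)
  then show "a ^ q * b = c ^ q * d" and "a ^ q * a + b ^ q * b = c ^ q * c + d ^ q * d"
    by (simp_all add: algebra_simps)
qed

lemma diagonal_lft_in_Stab_imp:
  fixes a b :: 'a
  assumes "3 \<le> card (roots_of_unity (q + 1) :: 'a set)"
    and "lft a b 0 1 \<in> Stab (roots_of_unity (q + 1))" and "a \<noteq> 0"
  shows "b = 0" and "a \<in> roots_of_unity (q + 1)"
  using lft_coeffs_if_in_Stab[OF assms(1,2)] \<open>a \<noteq> 0\<close> unfolding roots_of_unity_iff by simp_all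

lemma antidiagonal_lft_in_Stab_imp:
  fixes b d :: 'a
  assumes "3 \<le> card (roots_of_unity (q + 1) :: 'a set)"
    and "lft 0 b 1 d \<in> Stab (roots_of_unity (q + 1))"
  shows "d = 0" and "b \<in> roots_of_unity (q + 1)"
  using lft_coeffs_if_in_Stab[OF assms] unfolding roots_of_unity_iff by simp_all

lemma monic_lft_in_Stab_imp:
  fixes b c d :: 'a
  assumes "3 \<le> card (roots_of_unity (q + 1) :: 'a set)"
    and "lft 1 b c d \<in> Stab (roots_of_unity (q + 1))" and det: "d - b * c \<noteq> 0"
  shows "b = c ^ q * d" and "d \<in> roots_of_unity (q + 1)" and "c \<notin> roots_of_unity (q + 1)"
proof -
  define X where "X = c ^ q * c"
  define Y where "Y = d ^ q * d"
  have b: "b = c ^ q * d" and norms: "1 + b ^ q * b = X + Y"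
    using lft_coeffs_if_in_Stab[OF assms(1,2)] unfolding X_def Y_def by simp_all
  then show "b = c ^ q * d"
    by simp
  have "b ^ q * b = X * Y"
    unfolding b X_def Y_def by (simp add: power_mult_distrib conj_conj algebra_simps)
  with norms have "(1 - X) * (1 - Y) = 0"
    by (simp add: algebra_simps)
  moreover have "d - b * c = d * (1 - X)"
    unfolding b X_def by (simp add: algebra_simps)
  with det have "X \<noteq> 1"
    by auto
  ultimately have "Y = 1"
    by simp
  with \<open>X \<noteq> 1\<close> show "d \<in> roots_of_unity (q + 1)" and "c \<notin> roots_of_unity (q + 1)"
    unfolding roots_of_unity_iff X_def Y_def by simp_all
qed

lemma Stab_roots_of_unity_subset:
  fixes f :: "'a option \<Rightarrow> 'a option"
  assumes three: "3 \<le> card (roots_of_unity (q + 1) :: 'a set)"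
    and f: "f \<in> Stab (roots_of_unity (q + 1))"
  shows "f \<in> {lft u0 0 0 1 | u0. u0 \<in> roots_of_unity (q + 1)}
    \<union> {lft 0 u0 1 0 | u0. u0 \<in> roots_of_unity (q + 1)}
    \<union> {lft 1 (c ^ q * u0) c u0 | u0 c.
          u0 \<in> roots_of_unity (q + 1) \<and> c \<noteq> 0 \<and> c \<notin> roots_of_unity (q + 1)}"
proof -
  obtain a b c d where det: "a * d - b * c \<noteq> 0" and f_eq: "f = lft a b c d"
    using Stab_imp_lft[OF f] by blast
  consider "c = 0" | "a = 0" "c \<noteq> 0" | "a \<noteq> 0" "c \<noteq> 0"
    by blast
  then show ?thesis
  proof cases
    case 1
    with det have "a \<noteq> 0" "d \<noteq> 0"
      by auto
    with 1 f f_eq have "lft (a / d) (b / d) 0 1 \<in> Stab (roots_of_unity (q + 1))"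
      using lft_divide[of d a b c d] by simp
    from diagonal_lft_in_Stab_imp[OF three this] \<open>a \<noteq> 0\<close> \<open>d \<noteq> 0\<close>
    show ?thesis
      using 1 f_eq lft_divide[of d a b c d] by force
  next
    case 2
    with det have "b \<noteq> 0"
      by auto
    with 2 f f_eq have "lft 0 (b / c) 1 (d / c) \<in> Stab (roots_of_unity (q + 1))"
      using lft_divide[of c a b c d] by simp
    from antidiagonal_lft_in_Stab_imp[OF three this] \<open>c \<noteq> 0\<close>
    show ?thesis
      using 2 f_eq lft_divide[of c a b c d] by force
  next
    case 3
    have f_norm: "f = lft 1 (b / a) (c / a) (d / a)"
      using lft_divide[of a a b c d] f_eq \<open>a \<noteq> 0\<close> by simp
    have "d / a - b / a * (c / a) = (a * d - b * c) / a ^ 2"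
      using \<open>a \<noteq> 0\<close> by (simp add: field_simps power2_eq_square)
    with det \<open>a \<noteq> 0\<close> have "d / a - b / a * (c / a) \<noteq> 0"
      by simp
    from monic_lft_in_Stab_imp[OF three _ this] f f_norm 3
    show ?thesis
      by force
  qed
qed

lemma Stab_roots_of_unity_eq:
  assumes "3 \<le> card (roots_of_unity (q + 1) :: 'a set)"
  shows "Stab (roots_of_unity (q + 1) :: 'a set) =
      {lft u0 0 0 1 | u0. u0 \<in> roots_of_unity (q + 1)}
    \<union> {lft 0 u0 1 0 | u0. u0 \<in> roots_of_unity (q + 1)}
    \<union> {lft 1 (c ^ q * u0) c u0 | u0 c.
          u0 \<in> roots_of_unity (q + 1) \<and> c \<noteq> 0 \<and> c \<notin> roots_of_unity (q + 1)}"
  using Stab_roots_of_unity_subset[OF assms] rotation_in_Stab inversion_in_Stab type_III_in_Stab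
  by blast

lemma three_le_card_roots_of_unity:
  fixes x :: 'a
  assumes char: "CHAR('a) = 2" and x: "x ^ q \<noteq> x"
  shows "3 \<le> card (roots_of_unity (q + 1) :: 'a set)"
proof -
  have "x \<noteq> 0"
    using x by auto
  define v where "v = x ^ q / x"
  have v: "v \<in> roots_of_unity (q + 1)"
    unfolding roots_of_unity_iff v_def using \<open>x \<noteq> 0\<close> by (simp add: power_divide conj_conj)
  have "v \<noteq> 1"
    using x \<open>x \<noteq> 0\<close> unfolding v_def by simp
  have "v \<noteq> 1 / v"
  proof
    assume "v = 1 / v"
    then have "v * v = 1"
      using roots_of_unity_nonzero[OF v] by (simp add: field_simps)
    moreover have "(2::'a) = 0"
      using of_nat_CHAR[where 'a='a] char by simp
    ultimately have "(v + 1) ^ 2 = 0"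
      by (simp add: power2_eq_square algebra_simps)
    with \<open>v \<noteq> 1\<close> show False
      using uminus_CHAR_2[OF char, of v] by (simp add: add_eq_0_iff)
  qed
  have one: "1 \<in> roots_of_unity (q + 1)"
    by (simp add: roots_of_unity_def)
  have "{1, v, 1 / v} \<subseteq> roots_of_unity (q + 1)"
    using one v roots_of_unity_divide[OF one v] by blast
  moreover have "card {1, v, 1 / v} = 3"
    using \<open>v \<noteq> 1\<close> \<open>v \<noteq> 1 / v\<close> by (auto simp: divide_eq_eq)
  ultimately show ?thesis
    by (metis card_mono finite)
qed

end

lemma power_card_minus_one_eq_one:
  fixes x :: "'a::{field,finite}"
  assumes "x \<noteq> 0"
  shows "x ^ (card (UNIV :: 'a set) - 1) = 1"
proof -
  let ?S = "UNIV - {0::'a}"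
  have "x ^ card ?S * (\<Prod>y\<in>?S. y) = (\<Prod>y\<in>?S. x * y)"
    by (simp add: prod.distrib)
  also have "\<dots> = (\<Prod>y\<in>?S. y)"
    by (rule prod.reindex_bij_witness[of _ "\<lambda>y. y / x" "\<lambda>y. x * y"]) (use assms in auto)
  finally show ?thesis
    by (simp add: card_Diff_singleton)
qed

lemma power_card_eq_self: "(x :: 'a::{field,finite}) ^ card (UNIV :: 'a set) = x"
proof (cases "x = 0")
  case False
  have "card (UNIV :: 'a set) = Suc (card (UNIV :: 'a set) - 1)"
    by (simp add: finite_UNIV_card_ge_0)
  then show ?thesis
    using power_card_minus_one_eq_one[OF False] by (metis power_Suc mult_1_right)
qed (simp add: finite_UNIV_card_ge_0)

lemma CHAR_eq_2_if_even_card: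
  assumes "even (card (UNIV :: 'a::{field,finite} set))"
  shows "CHAR('a) = 2"
proof -
  have "odd (card (UNIV :: 'a set) - 1)"
    using assms by (simp add: finite_UNIV_card_ge_0)
  then have "(-1::'a) = 1"
    using power_card_minus_one_eq_one[of "-1::'a"] by simp
  then have "of_nat 2 = (0::'a)"
    by (metis add.right_inverse of_nat_numeral one_add_one)
  then have "CHAR('a) dvd 2"
    by (simp only: of_nat_eq_0_iff_char_dvd)
  then have "CHAR('a) \<le> 2" "0 < CHAR('a)"
    using dvd_imp_le[of "CHAR('a)" 2] dvd_pos_nat[of 2 "CHAR('a)"] by simp_all
  then show ?thesis
    using CHAR_not_1[where 'a='a] by linarith
qed

lemma exists_power_ne_self:
  assumes "2 \<le> q" and "q < card (UNIV :: 'a::idom set)"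
  shows "\<exists>x::'a. x ^ q \<noteq> x"
proof (rule ccontr)
  let ?P = "monom (1::'a) q + [:0, -1:]"
  assume "\<not> ?thesis"
  then have "{x. poly ?P x = 0} = UNIV"
    by (auto simp: poly_monom)
  moreover have "degree ?P = q"
    using assms(1) by (subst degree_add_eq_left) (auto simp: degree_monom_eq)
  moreover from this have "?P \<noteq> 0"
    using assms(1) by auto
  ultimately have "card (UNIV :: 'a set) \<le> q"
    using card_poly_roots_bound by metis
  with assms(2) show False
    by simp
qed

theorem proposition5:
  fixes m :: nat and q :: nat
  assumes "q = 2 ^ m"
    and "card (UNIV :: 'a::{field,finite} set) = q ^ 2"
  shows "Stab (roots_of_unity (q + 1) :: 'a set) =
      {lft u0 0 0 1 | u0. u0 \<in> roots_of_unity (q + 1)}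
    \<union> {lft 0 u0 1 0 | u0. u0 \<in> roots_of_unity (q + 1)}
    \<union> {lft 1 (c ^ q * u0) c u0 | u0 c.
          u0 \<in> roots_of_unity (q + 1) \<and> c \<noteq> 0 \<and> c \<notin> roots_of_unity (q + 1)}"
proof -
  have "2 \<le> card (UNIV :: 'a set)"
    using card_mono[of UNIV "{0::'a, 1}"] by simp
  with assms have "2 \<le> q"
    by (cases m) auto
  with assms have char: "CHAR('a) = 2"
    by (intro CHAR_eq_2_if_even_card) (cases m; simp)
  have conj_add: "(x + y) ^ q = x ^ q + y ^ q" for x y :: 'a
    by (rule freshmans_dream') (simp_all add: char assms(1))
  have conj_conj: "(x ^ q) ^ q = x" for x :: 'a
    using power_card_eq_self[of x] assms(2) by (simp add: power2_eq_square flip: power_mult)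
  have "q < q ^ 2"
    using \<open>2 \<le> q\<close> by (simp add: power2_eq_square)
  with \<open>2 \<le> q\<close> assms(2) obtain x :: 'a where "x ^ q \<noteq> x"
    using exists_power_ne_self[where 'a='a] by auto
  from three_le_card_roots_of_unity[OF conj_add conj_conj char this]
  show ?thesis
    by (rule Stab_roots_of_unity_eq[OF conj_add conj_conj])
qed

end
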